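(* Let $(\vdash,\overline{\cdot},\widehat{\cdot})$ be a setting satisfying Pre-Relevance, and let $\mathcal{S},\mathcal{S}'\subseteq\mathcal{L}$ with $\mathcal{S}\mid\mathcal{S}'$. If $\mathcal{E}$ is a complete extension of $\mathcal{AF}_{\vdash}(\mathcal{S})$ and $\mathcal{E}'$ is a complete extension of $\mathcal{AF}_{\vdash}(\mathcal{S}')$, then $\mathcal{E}\cup\mathcal{E}'$ is an admissible set of $\mathcal{AF}_{\vdash}(\mathcal{S}\cup\mathcal{S}')$.
   Context: $\mathcal{L}$ is the set of formulas of a language built from propositional atoms; $\mathsf{Atoms}(\mathcal{S})$ is the set of atoms occurring in $\mathcal{S}$, and $\mathcal{S}_1\mid\mathcal{S}_2$ means $\mathsf{Atoms}(\mathcal{S}_1)\cap\mathsf{Atoms}(\mathcal{S}_2)=\emptyset$. A setting is $(\vdash,\overline{\cdot},\widehat{\cdot})$ with ${\vdash}\subseteq\wp_{\sf fin}(\mathcal{L})\times\mathcal{L}$ arbitrary, $\overline{\cdot}:\mathcal{L}\to\wp(\mathcal{L})$, $\widehat{\cdot}$ assigning to each nonempty finite set a finite set of formulas, with $\widehat{\emptyset}=\emptyset$. $\mathit{Arg}_{\vdash}(\mathcal{S})=\{(\Gamma,\gamma):\Gamma\subseteq\mathcal{S}\text{ finite},\Gamma\vdash\gamma\}$; $\mathcal{AF}_{\vdash}(\mathcal{S})$ is the attack graph on it where $(\Gamma,\gamma)$ attacks $(\Gamma',\gamma')$ iff $\gamma\in\overline{\phi}$ for some $\phi\in\widehat{\Gamma'}$.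 Admissible = conflict-free and every attacker (in the framework) of a member is attacked by a member; complete = admissible and contains every argument it defends. Pre-Relevance of the setting: (a) for all $\mathcal{S}_1,\mathcal{S}_2,\phi$ with $\mathcal{S}_1\cup\{\phi\}\mid\mathcal{S}_2$, $\mathcal{S}_1\cup\mathcal{S}_2\vdash\phi$ implies $\mathcal{S}_1'\vdash\phi$ for some $\mathcal{S}_1'\subseteq\mathcal{S}_1$; (b) primeness: for all sets of atoms $\mathcal{A}_1\mid\mathcal{A}_2$, all finite $\mathcal{S}_1,\mathcal{T}_1,\mathcal{S}_2,\mathcal{T}_2$ with $\mathsf{Atoms}(\mathcal{S}_i),\mathsf{Atoms}(\mathcal{T}_i)\subseteq\mathcal{A}_i$, and all $\phi,\psi$ with $\psi\in\overline{\phi}$, $\phi\in\widehat{\mathcal{T}_1\cup\mathcal{T}_2}$: if $\mathcal{S}_1\cup\mathcal{S}_2\vdash\psi$ then there are $i\in\{1,2\}$, $\mathcal{S}_i'\subseteq\mathcal{S}_i$, $\phi_i\in\widehat{\mathcal{T}_i}$, $\psi_i\in\overline{\phi_i}$ with $\mathcal{S}_i'\vdash\psi_i$; (c) $\widehat{\Delta}\subseteq\widehat{\Delta\cup\Delta'}$ for all finite $\Delta,\Delta'$. *)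

theory Defs
  imports Main
begin

definition Atoms :: "('f \<Rightarrow> 'a set) \<Rightarrow> 'f set \<Rightarrow> 'a set" where
  "Atoms atoms S = (\<Union>x\<in>S. atoms x)"

definition indep :: "('f \<Rightarrow> 'a set) \<Rightarrow> 'f set \<Rightarrow> 'f set \<Rightarrow> bool" where
  "indep atoms S1 S2 \<longleftrightarrow> Atoms atoms S1 \<inter> Atoms atoms S2 = {}"

definition setting :: "('f set \<Rightarrow> 'f \<Rightarrow> bool) \<Rightarrow> ('f \<Rightarrow> 'f set) \<Rightarrow> ('f set \<Rightarrow> 'f set) \<Rightarrow> bool" where
  "setting vd ov ha \<longleftrightarrow>
     (\<forall>\<Gamma> \<gamma>. vd \<Gamma> \<gamma> \<longrightarrow> finite \<Gamma>) \<and>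
     (\<forall>\<Delta>. finite \<Delta> \<longrightarrow> finite (ha \<Delta>)) \<and> ha {} = {}"

definition Arg :: "('f set \<Rightarrow> 'f \<Rightarrow> bool) \<Rightarrow> 'f set \<Rightarrow> ('f set \<times> 'f) set" where
  "Arg vd S = {(\<Gamma>, \<gamma>). finite \<Gamma> \<and> \<Gamma> \<subseteq> S \<and> vd \<Gamma> \<gamma>}"

definition attacks :: "('f \<Rightarrow> 'f set) \<Rightarrow> ('f set \<Rightarrow> 'f set) \<Rightarrow> ('f set \<times> 'f) \<Rightarrow> ('f set \<times> 'f) \<Rightarrow> bool" where
  "attacks ov ha a b \<longleftrightarrow> (\<exists>\<phi>\<in>ha (fst b). snd a \<in> ov \<phi>)"

definition conflict_free :: "('f \<Rightarrow> 'f set) \<Rightarrow> ('f set \<Rightarrow> 'f set) \<Rightarrow> ('f set \<times> 'f) set \<Rightarrow> bool" where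
  "conflict_free ov ha E \<longleftrightarrow> (\<forall>a\<in>E. \<forall>b\<in>E. \<not> attacks ov ha a b)"

definition defends :: "('f \<Rightarrow> 'f set) \<Rightarrow> ('f set \<Rightarrow> 'f set) \<Rightarrow> ('f set \<times> 'f) set \<Rightarrow> ('f set \<times> 'f) set \<Rightarrow> ('f set \<times> 'f) \<Rightarrow> bool" where
  "defends ov ha Args E a \<longleftrightarrow> (\<forall>b\<in>Args. attacks ov ha b a \<longrightarrow> (\<exists>c\<in>E. attacks ov ha c b))"

definition admissible :: "('f set \<Rightarrow> 'f \<Rightarrow> bool) \<Rightarrow> ('f \<Rightarrow> 'f set) \<Rightarrow> ('f set \<Rightarrow> 'f set) \<Rightarrow> 'f set \<Rightarrow> ('f set \<times> 'f) set \<Rightarrow> bool" where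
  "admissible vd ov ha S E \<longleftrightarrow> E \<subseteq> Arg vd S \<and> conflict_free ov ha E \<and>
     (\<forall>a\<in>E. defends ov ha (Arg vd S) E a)"

definition complete :: "('f set \<Rightarrow> 'f \<Rightarrow> bool) \<Rightarrow> ('f \<Rightarrow> 'f set) \<Rightarrow> ('f set \<Rightarrow> 'f set) \<Rightarrow> 'f set \<Rightarrow> ('f set \<times> 'f) set \<Rightarrow> bool" where
  "complete vd ov ha S E \<longleftrightarrow> admissible vd ov ha S E \<and>
     (\<forall>a\<in>Arg vd S. defends ov ha (Arg vd S) E a \<longrightarrow> a \<in> E)"

definition pre_relevance :: "('f \<Rightarrow> 'a set) \<Rightarrow> ('f set \<Rightarrow> 'f \<Rightarrow> bool) \<Rightarrow> ('f \<Rightarrow> 'f set) \<Rightarrow> ('f set \<Rightarrow> 'f set) \<Rightarrow> bool" where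
  "pre_relevance atoms vd ov ha \<longleftrightarrow>
    (\<forall>S1 S2 \<phi>. indep atoms (S1 \<union> {\<phi>}) S2 \<longrightarrow> vd (S1 \<union> S2) \<phi> \<longrightarrow>
        (\<exists>S1'. S1' \<subseteq> S1 \<and> vd S1' \<phi>)) \<and>
    (\<forall>A1 A2 S1 T1 S2 T2 \<phi> \<psi>. A1 \<inter> A2 = {} \<longrightarrow>
        finite S1 \<longrightarrow> finite T1 \<longrightarrow> finite S2 \<longrightarrow> finite T2 \<longrightarrow>
        Atoms atoms S1 \<subseteq> A1 \<longrightarrow> Atoms atoms T1 \<subseteq> A1 \<longrightarrow>
        Atoms atoms S2 \<subseteq> A2 \<longrightarrow> Atoms atoms T2 \<subseteq> A2 \<longrightarrow>
        \<psi> \<in> ov \<phi> \<longrightarrow> \<phi> \<in> ha (T1 \<union> T2) \<longrightarrow> vd (S1 \<union> S2) \<psi> \<longrightarrow>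
        ((\<exists>S1' \<phi>1 \<psi>1. S1' \<subseteq> S1 \<and> \<phi>1 \<in> ha T1 \<and> \<psi>1 \<in> ov \<phi>1 \<and> vd S1' \<psi>1) \<or>
         (\<exists>S2' \<phi>2 \<psi>2. S2' \<subseteq> S2 \<and> \<phi>2 \<in> ha T2 \<and> \<psi>2 \<in> ov \<phi>2 \<and> vd S2' \<psi>2))) \<and>
    (\<forall>\<Delta> \<Delta>'. finite \<Delta> \<longrightarrow> finite \<Delta>' \<longrightarrow> ha \<Delta> \<subseteq> ha (\<Delta> \<union> \<Delta>'))"

end

theory Submission
  imports Defs
begin

text \<open>Over disjoint languages, primeness traces every attack on an argument back to those
premises of the attacker that share the language of the attacked argument.  So an argument
over \<open>S\<close> attacking one over \<open>S'\<close> can be replaced by an attacker without premises, which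
cannot itself be attacked (\<open>ha {} = {}\<close>): admissible sets over \<open>S\<close> and \<open>S'\<close> therefore never
attack each other.  Likewise an attacker over \<open>S \<union> S'\<close> of an argument over \<open>S\<close> can be cut
down to its premises in \<open>S\<close>; by monotonicity of \<open>ha\<close>, whatever defeats the cut-down attacker
also defeats the original one, so defence in \<open>S\<close> lifts to defence in \<open>S \<union> S'\<close>.\<close>

lemma Atoms_mono: "A \<subseteq> B \<Longrightarrow> Atoms atoms A \<subseteq> Atoms atoms B"
  unfolding Atoms_def by blast

lemma indep_sym: "indep atoms S S' \<Longrightarrow> indep atoms S' S"
  unfolding indep_def by blast

lemma setting_finite_premises: "setting vd ov ha \<Longrightarrow> vd \<Gamma> \<gamma> \<Longrightarrow> finite \<Gamma>"
  unfolding setting_def by blast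

lemma setting_hat_empty: "setting vd ov ha \<Longrightarrow> ha {} = {}"
  unfolding setting_def by blast

lemma not_attacks_empty_premises: "ha {} = {} \<Longrightarrow> \<not> attacks ov ha c ({}, \<psi>)"
  unfolding attacks_def by simp

lemma pre_relevance_hat_mono:
  assumes "pre_relevance atoms vd ov ha" "finite \<Delta>" "finite \<Delta>'"
  shows "ha \<Delta> \<subseteq> ha (\<Delta> \<union> \<Delta>')"
proof -
  have "\<forall>\<Delta> \<Delta>'. finite \<Delta> \<longrightarrow> finite \<Delta>' \<longrightarrow> ha \<Delta> \<subseteq> ha (\<Delta> \<union> \<Delta>')"
    using assms(1) unfolding pre_relevance_def by (rule conjunct2[OF conjunct2])
  from this[rule_format, OF assms(2,3)] show ?thesis .
qed

lemma pre_relevance_prime: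
  assumes "pre_relevance atoms vd ov ha" "A1 \<inter> A2 = {}"
    and "finite S1" "finite T1" "finite S2" "finite T2"
    and "Atoms atoms S1 \<subseteq> A1" "Atoms atoms T1 \<subseteq> A1"
    and "Atoms atoms S2 \<subseteq> A2" "Atoms atoms T2 \<subseteq> A2"
    and "\<psi> \<in> ov \<phi>" "\<phi> \<in> ha (T1 \<union> T2)" "vd (S1 \<union> S2) \<psi>"
  shows "(\<exists>S1' \<phi>1 \<psi>1. S1' \<subseteq> S1 \<and> \<phi>1 \<in> ha T1 \<and> \<psi>1 \<in> ov \<phi>1 \<and> vd S1' \<psi>1) \<or>
         (\<exists>S2' \<phi>2 \<psi>2. S2' \<subseteq> S2 \<and> \<phi>2 \<in> ha T2 \<and> \<psi>2 \<in> ov \<phi>2 \<and> vd S2' \<psi>2)"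
proof -
  have "\<forall>A1 A2 S1 T1 S2 T2 \<phi> \<psi>. A1 \<inter> A2 = {} \<longrightarrow>
        finite S1 \<longrightarrow> finite T1 \<longrightarrow> finite S2 \<longrightarrow> finite T2 \<longrightarrow>
        Atoms atoms S1 \<subseteq> A1 \<longrightarrow> Atoms atoms T1 \<subseteq> A1 \<longrightarrow>
        Atoms atoms S2 \<subseteq> A2 \<longrightarrow> Atoms atoms T2 \<subseteq> A2 \<longrightarrow>
        \<psi> \<in> ov \<phi> \<longrightarrow> \<phi> \<in> ha (T1 \<union> T2) \<longrightarrow> vd (S1 \<union> S2) \<psi> \<longrightarrow>
        ((\<exists>S1' \<phi>1 \<psi>1. S1' \<subseteq> S1 \<and> \<phi>1 \<in> ha T1 \<and> \<psi>1 \<in> ov \<phi>1 \<and> vd S1' \<psi>1) \<or>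
         (\<exists>S2' \<phi>2 \<psi>2. S2' \<subseteq> S2 \<and> \<phi>2 \<in> ha T2 \<and> \<psi>2 \<in> ov \<phi>2 \<and> vd S2' \<psi>2))"
    using assms(1) unfolding pre_relevance_def by (rule conjunct1[OF conjunct2])
  from this[rule_format, OF assms(2-)] show ?thesis .
qed

lemma attack_localises:
  assumes pr: "pre_relevance atoms vd ov ha" and hat_empty: "ha {} = {}"
    and disj: "A1 \<inter> A2 = {}"
    and fin: "finite S1" "finite S2" "finite T"
    and atoms: "Atoms atoms S1 \<subseteq> A1" "Atoms atoms T \<subseteq> A1" "Atoms atoms S2 \<subseteq> A2"
    and arg: "vd (S1 \<union> S2) \<psi>" and att: "attacks ov ha (S1 \<union> S2, \<psi>) (T, t)"
  shows "\<exists>S1' \<psi>1. S1' \<subseteq> S1 \<and> vd S1' \<psi>1 \<and> attacks ov ha (S1', \<psi>1) (T, t)"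
proof -
  obtain \<phi> where \<phi>: "\<phi> \<in> ha (T \<union> {})" "\<psi> \<in> ov \<phi>"
    using att unfolding attacks_def by auto
  have "Atoms atoms {} \<subseteq> A2" unfolding Atoms_def by simp
  from pre_relevance_prime[OF pr disj fin(1,3,2) finite.emptyI atoms this \<phi>(2,1) arg]
  have "\<exists>S1' \<phi>1 \<psi>1. S1' \<subseteq> S1 \<and> \<phi>1 \<in> ha T \<and> \<psi>1 \<in> ov \<phi>1 \<and> vd S1' \<psi>1"
    using hat_empty by blast
  then show ?thesis unfolding attacks_def by auto
qed

lemma attacks_premises_mono:
  assumes "pre_relevance atoms vd ov ha" "finite \<Gamma>'" "finite \<Gamma>" "\<Gamma>' \<subseteq> \<Gamma>"
    and "attacks ov ha c (\<Gamma>', \<gamma>')"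
  shows "attacks ov ha c (\<Gamma>, \<gamma>)"
proof -
  have "ha \<Gamma>' \<subseteq> ha (\<Gamma>' \<union> \<Gamma>)" using pre_relevance_hat_mono assms(1-3) .
  also have "\<Gamma>' \<union> \<Gamma> = \<Gamma>" using assms(4) by blast
  finally show ?thesis using assms(5) unfolding attacks_def by auto
qed

lemma attack_from_independent_has_empty_premises:
  assumes set: "setting vd ov ha" and pr: "pre_relevance atoms vd ov ha"
    and ind: "indep atoms S S'"
    and a: "(\<Gamma>, \<gamma>) \<in> Arg vd S" and b: "(\<Delta>, \<delta>) \<in> Arg vd S'"
    and att: "attacks ov ha (\<Gamma>, \<gamma>) (\<Delta>, \<delta>)"
  shows "\<exists>\<psi>. vd {} \<psi> \<and> attacks ov ha ({}, \<psi>) (\<Delta>, \<delta>)"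
proof -
  have disj: "Atoms atoms S' \<inter> Atoms atoms S = {}" using ind unfolding indep_def by blast
  have a_args: "finite \<Gamma>" "\<Gamma> \<subseteq> S" "vd \<Gamma> \<gamma>" using a unfolding Arg_def by auto
  have b_args: "finite \<Delta>" "\<Delta> \<subseteq> S'" using b unfolding Arg_def by auto
  have "Atoms atoms {} \<subseteq> Atoms atoms S'" unfolding Atoms_def by simp
  from attack_localises[OF pr setting_hat_empty[OF set] disj finite.emptyI a_args(1) b_args(1)
      this Atoms_mono[OF b_args(2)] Atoms_mono[OF a_args(2)]] a_args(3) att
  show ?thesis by auto
qed

lemma admissible_not_attacked_from_independent:
  assumes set: "setting vd ov ha" and pr: "pre_relevance atoms vd ov ha"
    and ind: "indep atoms S S'" and adm: "admissible vd ov ha S' E'"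
    and a: "a \<in> Arg vd S" and b: "b \<in> E'"
  shows "\<not> attacks ov ha a b"
proof
  assume att: "attacks ov ha a b"
  have b_arg: "b \<in> Arg vd S'" and b_def: "defends ov ha (Arg vd S') E' b"
    using adm b unfolding admissible_def by blast+
  obtain \<Gamma> \<gamma> where a_eq: "a = (\<Gamma>, \<gamma>)" by (cases a)
  obtain \<Delta> \<delta> where b_eq: "b = (\<Delta>, \<delta>)" by (cases b)
  from attack_from_independent_has_empty_premises[OF set pr ind
      a[unfolded a_eq] b_arg[unfolded b_eq] att[unfolded a_eq b_eq]]
  obtain \<psi> where \<psi>: "vd {} \<psi>" "attacks ov ha ({}, \<psi>) b"
    unfolding b_eq by blast
  have "({}, \<psi>) \<in> Arg vd S'" using \<psi>(1) unfolding Arg_def by simp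
  then obtain c where "attacks ov ha c ({}, \<psi>)"
    using b_def \<psi>(2) unfolding defends_def by blast
  with not_attacks_empty_premises[where ha = ha, OF setting_hat_empty[OF set]] show False by blast
qed

lemma attack_restricts_to_independent_part:
  assumes set: "setting vd ov ha" and pr: "pre_relevance atoms vd ov ha"
    and ind: "indep atoms S S'"
    and a: "(\<Gamma>, \<gamma>) \<in> Arg vd S" and b: "(\<Delta>, \<delta>) \<in> Arg vd (S \<union> S')"
    and att: "attacks ov ha (\<Delta>, \<delta>) (\<Gamma>, \<gamma>)"
  shows "\<exists>\<Delta>' \<psi>. \<Delta>' \<subseteq> \<Delta> \<and> (\<Delta>', \<psi>) \<in> Arg vd S \<and> attacks ov ha (\<Delta>', \<psi>) (\<Gamma>, \<gamma>)"
proof -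
  have disj: "Atoms atoms S \<inter> Atoms atoms S' = {}" using ind unfolding indep_def .
  have a_args: "finite \<Gamma>" "\<Gamma> \<subseteq> S" using a unfolding Arg_def by auto
  have b_args: "finite \<Delta>" "\<Delta> \<subseteq> S \<union> S'" "vd \<Delta> \<delta>" using b unfolding Arg_def by auto
  have split: "(\<Delta> \<inter> S) \<union> (\<Delta> - S) = \<Delta>" by blast
  have parts: "\<Delta> \<inter> S \<subseteq> S" "\<Delta> - S \<subseteq> S'" using b_args(2) by blast+
  have "finite (\<Delta> \<inter> S)" "finite (\<Delta> - S)" using b_args(1) by simp_all
  moreover have "vd ((\<Delta> \<inter> S) \<union> (\<Delta> - S)) \<delta>"
    and "attacks ov ha ((\<Delta> \<inter> S) \<union> (\<Delta> - S), \<delta>) (\<Gamma>, \<gamma>)"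
    unfolding split using b_args(3) att .
  ultimately obtain \<Delta>' \<psi> where
    "\<Delta>' \<subseteq> \<Delta> \<inter> S" "vd \<Delta>' \<psi>" "attacks ov ha (\<Delta>', \<psi>) (\<Gamma>, \<gamma>)"
    using attack_localises[OF pr setting_hat_empty[OF set] disj _ _ a_args(1)
      Atoms_mono[OF parts(1)] Atoms_mono[OF a_args(2)] Atoms_mono[OF parts(2)]] by meson
  moreover have "finite \<Delta>'" using setting_finite_premises[OF set] \<open>vd \<Delta>' \<psi>\<close> .
  ultimately show ?thesis unfolding Arg_def by blast
qed

lemma defends_Un_independent:
  assumes set: "setting vd ov ha" and pr: "pre_relevance atoms vd ov ha"
    and ind: "indep atoms S S'"
    and a: "a \<in> Arg vd S" and def: "defends ov ha (Arg vd S) E a"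
  shows "defends ov ha (Arg vd (S \<union> S')) E a"
  unfolding defends_def
proof (intro ballI impI)
  fix b assume b: "b \<in> Arg vd (S \<union> S')" and att: "attacks ov ha b a"
  obtain \<Gamma> \<gamma> where a_eq: "a = (\<Gamma>, \<gamma>)" by (cases a)
  obtain \<Delta> \<delta> where b_eq: "b = (\<Delta>, \<delta>)" by (cases b)
  from attack_restricts_to_independent_part[OF set pr ind
      a[unfolded a_eq] b[unfolded b_eq] att[unfolded a_eq b_eq]]
  obtain \<Delta>' \<psi> where b': "\<Delta>' \<subseteq> \<Delta>" "(\<Delta>', \<psi>) \<in> Arg vd S" "attacks ov ha (\<Delta>', \<psi>) a"
    unfolding a_eq by blast
  then obtain c where c: "c \<in> E" "attacks ov ha c (\<Delta>', \<psi>)"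
    using def unfolding defends_def by blast
  have "finite \<Delta>'" "finite \<Delta>"
    using b'(2) b unfolding b_eq Arg_def by auto
  from attacks_premises_mono[OF pr this b'(1) c(2)] c(1)
  show "\<exists>c\<in>E. attacks ov ha c b" unfolding b_eq by blast
qed

lemma defends_mono: "defends ov ha Args E a \<Longrightarrow> E \<subseteq> F \<Longrightarrow> defends ov ha Args F a"
  unfolding defends_def by blast

lemma admissible_Un_independent:
  assumes set: "setting vd ov ha" and pr: "pre_relevance atoms vd ov ha"
    and ind: "indep atoms S S'"
    and adm: "admissible vd ov ha S E" and adm': "admissible vd ov ha S' E'"
  shows "admissible vd ov ha (S \<union> S') (E \<union> E')"
proof -
  have ind': "indep atoms S' S" using indep_sym[OF ind] .
  have args: "E \<subseteq> Arg vd S" "E' \<subseteq> Arg vd S'"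
    using adm adm' unfolding admissible_def by auto
  have "E \<union> E' \<subseteq> Arg vd (S \<union> S')"
    using args unfolding Arg_def by auto
  moreover have "conflict_free ov ha (E \<union> E')"
    using adm adm' args
      admissible_not_attacked_from_independent[OF set pr ind adm']
      admissible_not_attacked_from_independent[OF set pr ind' adm]
    unfolding admissible_def conflict_free_def by blast
  moreover have "defends ov ha (Arg vd (S \<union> S')) (E \<union> E') a" if "a \<in> E \<union> E'" for a
    using that
  proof
    assume "a \<in> E"
    then show ?thesis
      using adm args defends_Un_independent[OF set pr ind]
      unfolding admissible_def by (blast intro: defends_mono)
  next
    assume "a \<in> E'"
    then show ?thesis
      using adm' args defends_Un_independent[OF set pr ind']
      unfolding admissible_def Un_commute[of S] by (blast intro: defends_mono)
  qed
  ultimately show ?thesis unfolding admissible_def by blast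
qed

theorem lemma3:
  fixes atoms :: "'f \<Rightarrow> 'a set"
    and vd :: "'f set \<Rightarrow> 'f \<Rightarrow> bool"
    and ov :: "'f \<Rightarrow> 'f set"
    and ha :: "'f set \<Rightarrow> 'f set"
    and S S' :: "'f set"
    and E E' :: "('f set \<times> 'f) set"
  assumes "setting vd ov ha"
    and "pre_relevance atoms vd ov ha"
    and "indep atoms S S'"
    and "complete vd ov ha S E"
    and "complete vd ov ha S' E'"
  shows "admissible vd ov ha (S \<union> S') (E \<union> E')"
  using admissible_Un_independent[OF assms(1-3)] assms(4,5)
  unfolding complete_def by blast

end
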